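(* Let $H$ be a Hilbert $C^*$-module and $Q\in\mathcal{L}(H)$ an idempotent. Let $C=\big(I-m(Q)-s(Q)\big)^2$. Then $C$ is invertible and $$Q=\tfrac12C^{-1}\Big[\big(C^{1/2}+s(Q)\big)\big(2m(Q)-I\big)+I-m(Q)\Big].$$
   Context: $H$ is a Hilbert module over a $C^*$-algebra, $\mathcal{L}(H)$ the adjointable operators. For $T$, $|T|=(T^*T)^{1/2}$ and $T^\dagger$ is the Moore–Penrose inverse. For an idempotent $Q$, the matched projection is $m(Q)=\tfrac12(|Q^*|+Q^* )|Q^*|^\dagger(|Q^*|+I)^{-1}(|Q^*|+Q)$, and the supplementary projection is $s(Q)=m(2P_{\mathcal{R}(Q)}-Q)$, where $P_{\mathcal{R}(Q)}$ is the projection onto $\mathcal{R}(Q)$. *)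

theory Defs
  imports "HOL-Analysis.Analysis"
begin

text \<open>The algebra of adjointable operators L(H) on a
Hilbert C*-module H is such an algebra (with the operator norm and adjoint), and
every unital C*-algebra A arises as L(A) for A viewed as a Hilbert module over itself.\<close>

class cstar_algebra = real_normed_algebra_1 + banach +
  fixes adj :: "'a \<Rightarrow> 'a"
    and scaleC :: "complex \<Rightarrow> 'a \<Rightarrow> 'a"
  assumes scaleC_of_real: "scaleC (complex_of_real r) x = scaleR r x"
    and scaleC_add_left: "scaleC (c + d) x = scaleC c x + scaleC d x"
    and scaleC_add_right: "scaleC c (x + y) = scaleC c x + scaleC c y"
    and scaleC_scaleC: "scaleC c (scaleC d x) = scaleC (c * d) x"
    and norm_scaleC: "norm (scaleC c x) = cmod c * norm x"
    and scaleC_mult_left: "scaleC c x * y = scaleC c (x * y)"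
    and scaleC_mult_right: "x * scaleC c y = scaleC c (x * y)"
    and adj_adj: "adj (adj x) = x"
    and adj_add: "adj (x + y) = adj x + adj y"
    and adj_mult: "adj (x * y) = adj y * adj x"
    and adj_scaleC: "adj (scaleC c x) = scaleC (cnj c) (adj x)"
    and cstar_identity: "norm (adj x * x) = norm x ^ 2"

definition positive :: "'a::cstar_algebra \<Rightarrow> bool" where
  "positive a \<longleftrightarrow> (\<exists>b. a = adj b * b)"

definition psqrt :: "'a::cstar_algebra \<Rightarrow> 'a" where
  "psqrt a = (THE r. positive r \<and> r * r = a)"

definition absv :: "'a::cstar_algebra \<Rightarrow> 'a" where
  "absv T = psqrt (adj T * T)"

definition invertible_el :: "'a::cstar_algebra \<Rightarrow> bool" where
  "invertible_el x \<longleftrightarrow> (\<exists>y. x * y = 1 \<and> y * x = 1)"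

definition inv_el :: "'a::cstar_algebra \<Rightarrow> 'a" where
  "inv_el x = (THE y. x * y = 1 \<and> y * x = 1)"

definition mp_inv :: "'a::cstar_algebra \<Rightarrow> 'a" where
  "mp_inv T = (THE X. T * X * T = T \<and> X * T * X = X \<and>
                      adj (T * X) = T * X \<and> adj (X * T) = X * T)"

definition idempotent :: "'a::cstar_algebra \<Rightarrow> bool" where
  "idempotent Q \<longleftrightarrow> Q * Q = Q"

text \<open>Projection P_R(Q) onto the range of Q: the self-adjoint idempotent P with
R(P) = R(Q), i.e. P Q = Q (R(Q) \<subseteq> R(P)) and Q P = P (R(P) \<subseteq> R(Q)).\<close>
definition range_proj :: "'a::cstar_algebra \<Rightarrow> 'a" where
  "range_proj Q = (THE P. adj P = P \<and> P * P = P \<and> P * Q = Q \<and> Q * P = P)"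

definition matched_proj :: "'a::cstar_algebra \<Rightarrow> 'a" where
  "matched_proj Q =
     scaleR (1/2) ((absv (adj Q) + adj Q) * mp_inv (absv (adj Q))
        * inv_el (absv (adj Q) + 1) * (absv (adj Q) + Q))"

definition supp_proj :: "'a::cstar_algebra \<Rightarrow> 'a" where
  "supp_proj Q = matched_proj (2 * range_proj Q - Q)"

end

theory Submission
  imports Defs "HOL-Computational_Algebra.Formal_Power_Series"
begin

(* Let P be the range projection of the idempotent Q, T = Q - P and S = T + T*. Then PT = T, TP = 0
   and T^2 = 0; with F = (1 + S^2)^(1/2) and G = F^-1, which commute with P and S, one finds
   |Q*| = PF, (PF)^+ = PG and m(Q) = (1 + G (2P - 1 + S)) / 2. The idempotent 2P - Q has the same
   range projection and -S in place of S, so s(Q) = (1 + G (2P - 1 - S)) / 2. Hence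
   1 - m(Q) - s(Q) = -G (2P - 1), C = G^2, C^(1/2) = G, C^-1 = F^2, and the formula for Q is a
   direct computation.

   Everything about positivity that this uses is derived from the C*-identity: self-adjoint
   elements have real spectrum and norm equal to their spectral radius, positive square roots
   exist (binomial series) and are unique, and every x* x is positive (Fukamiya-Kelley-Vaught). *)

section \<open>Adjoint and complex scaling\<close>

declare adj_add [simp] adj_mult [simp] adj_adj [simp]

lemma adj_zero [simp]: "adj (0::'a::cstar_algebra) = 0"
  by (metis add_cancel_right_right adj_add)

lemma adj_minus [simp]: "adj (- x) = - adj (x::'a::cstar_algebra)"
  by (metis add.right_inverse add_eq_0_iff adj_add adj_zero)

lemma adj_diff [simp]: "adj (x - y) = adj x - adj (y::'a::cstar_algebra)"
  by (metis adj_add adj_minus diff_conv_add_uminus)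

lemma adj_one [simp]: "adj (1::'a::cstar_algebra) = 1"
  by (metis adj_adj adj_mult mult.right_neutral)

lemma adj_scaleR [simp]: "adj (scaleR r x) = scaleR r (adj (x::'a::cstar_algebra))"
  by (metis adj_scaleC complex_cnj_complex_of_real scaleC_of_real)

lemma adj_of_real [simp]: "adj (of_real r :: 'a::cstar_algebra) = of_real r"
  by (simp add: of_real_def)

lemma adj_power [simp]: "adj (x ^ n) = adj x ^ n" for x :: "'a::cstar_algebra"
  by (induction n) (simp_all add: power_commutes)

lemma norm_adj [simp]: "norm (adj x) = norm (x::'a::cstar_algebra)"
proof -
  have le: "norm y \<le> norm (adj y)" for y :: 'a
  proof (cases "y = 0")
    case False
    have "norm y * norm y = norm (adj y * y)" by (simp add: cstar_identity power2_eq_square)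
    also have "\<dots> \<le> norm (adj y) * norm y" by (rule norm_mult_ineq)
    finally show ?thesis using False by simp
  qed simp
  show ?thesis using le[of x] le[of "adj x"] by simp
qed

lemma bounded_linear_adj: "bounded_linear (adj :: 'a::cstar_algebra \<Rightarrow> 'a)"
  by (rule bounded_linear_intro[where K=1]) simp_all

lemma scaleC_zero_right [simp]: "scaleC c (0::'a::cstar_algebra) = 0"
  by (metis add_cancel_right_right scaleC_add_right)

lemma scaleC_zero_left [simp]: "scaleC 0 (x::'a::cstar_algebra) = 0"
  by (metis add_cancel_right_right add_0 scaleC_add_left)

lemma scaleC_minus_left: "scaleC (- c) (x::'a::cstar_algebra) = - scaleC c x"
  by (metis add.right_inverse add_eq_0_iff scaleC_add_left scaleC_zero_left)

lemma scaleC_minus_right: "scaleC c (- x::'a::cstar_algebra) = - scaleC c x"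
  by (metis add.right_inverse add_eq_0_iff scaleC_add_right scaleC_zero_right)

lemma scaleC_diff_right: "scaleC c (x - y::'a::cstar_algebra) = scaleC c x - scaleC c y"
  by (metis diff_conv_add_uminus scaleC_add_right scaleC_minus_right)

lemma scaleC_one [simp]: "scaleC 1 (x::'a::cstar_algebra) = x"
  by (metis of_real_1 scaleC_of_real scaleR_one)

lemma scaleC_of_real_one: "scaleC (complex_of_real t) (1::'a::cstar_algebra) = of_real t"
  by (subst scaleC_of_real) (simp add: of_real_def)

lemma bounded_linear_scaleC_left: "bounded_linear (\<lambda>c. scaleC c (x::'a::cstar_algebra))"
proof (rule bounded_linear_intro[where K = "norm x"])
  show "scaleC (r *\<^sub>R c) x = r *\<^sub>R scaleC c x" for r c
    by (simp add: scaleR_conv_of_real scaleC_of_real flip: scaleC_scaleC)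
qed (simp_all add: scaleC_add_left norm_scaleC)

lemma scaleC_one_mult_commute: "scaleC c 1 * x = x * scaleC c (1::'a::cstar_algebra)"
  by (simp add: scaleC_mult_left scaleC_mult_right)

section \<open>Invertible elements\<close>

lemma inv_el_unique: "x * y = 1 \<Longrightarrow> y * x = 1 \<Longrightarrow> inv_el x = (y::'a::cstar_algebra)"
  unfolding inv_el_def by (rule the_equality) (auto, metis mult.assoc mult_1_left mult_1_right)

lemma invertible_elI: "x * y = 1 \<Longrightarrow> y * x = 1 \<Longrightarrow> invertible_el (x::'a::cstar_algebra)"
  unfolding invertible_el_def by blast

lemma inv_el_right: "invertible_el x \<Longrightarrow> x * inv_el x = (1::'a::cstar_algebra)"
  and inv_el_left: "invertible_el x \<Longrightarrow> inv_el x * x = (1::'a::cstar_algebra)"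
  unfolding invertible_el_def using inv_el_unique by metis+

lemma inv_el_inv_el: "invertible_el x \<Longrightarrow> inv_el (inv_el x) = (x::'a::cstar_algebra)"
  by (simp add: inv_el_unique inv_el_left inv_el_right)

lemma invertible_el_one [simp]: "invertible_el (1::'a::cstar_algebra)"
  by (rule invertible_elI[of _ 1]) simp_all

lemma inv_el_one [simp]: "inv_el (1::'a::cstar_algebra) = 1"
  by (rule inv_el_unique) simp_all

lemma invertible_el_mult:
  assumes "invertible_el a" "invertible_el (b::'a::cstar_algebra)"
  shows "invertible_el (a * b)" "inv_el (a * b) = inv_el b * inv_el a"
proof -
  have "(a * b) * (inv_el b * inv_el a) = 1" "(inv_el b * inv_el a) * (a * b) = 1"
    using assms by (metis inv_el_left inv_el_right mult.assoc mult_1_left)+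
  then show "invertible_el (a * b)" "inv_el (a * b) = inv_el b * inv_el a"
    by (simp_all add: invertible_elI inv_el_unique)
qed

lemma invertible_el_left_right:
  assumes "x * y = 1" "z * x = (1::'a::cstar_algebra)"
  shows "invertible_el x"
  using assms by (metis invertible_elI mult.assoc mult_1_left mult_1_right)

lemma invertible_el_commuting_factors:
  assumes "invertible_el (a * b)" "a * b = b * (a::'a::cstar_algebra)"
  shows "invertible_el a" "invertible_el b"
proof -
  let ?c = "inv_el (a * b)"
  have c: "a * b * ?c = 1" "?c * (a * b) = 1" using assms inv_el_left inv_el_right by auto
  have "a * (b * ?c) = 1" "(?c * b) * a = 1" using c assms(2) by (metis mult.assoc)+
  then show "invertible_el a" by (rule invertible_el_left_right)
  have "b * (a * ?c) = 1" "(?c * a) * b = 1" using c assms(2) by (metis mult.assoc)+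
  then show "invertible_el b" by (rule invertible_el_left_right)
qed

lemma inv_el_commute:
  assumes "invertible_el x" "a * x = x * (a::'a::cstar_algebra)"
  shows "a * inv_el x = inv_el x * a"
proof -
  have "a * inv_el x = inv_el x * x * a * inv_el x" by (simp add: inv_el_left[OF assms(1)])
  also have "\<dots> = inv_el x * a * x * inv_el x" using assms(2) by (simp add: mult.assoc)
  also have "\<dots> = inv_el x * a" by (simp add: mult.assoc inv_el_right[OF assms(1)])
  finally show ?thesis .
qed

lemma adj_inv_el: "invertible_el h \<Longrightarrow> adj h = h \<Longrightarrow> adj (inv_el h) = inv_el (h::'a::cstar_algebra)"
  by (metis adj_mult adj_one inv_el_left inv_el_right inv_el_unique)

lemma invertible_el_minus_iff [simp]: "invertible_el (- x) \<longleftrightarrow> invertible_el (x::'a::cstar_algebra)"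
  by (metis invertible_el_def minus_minus minus_mult_minus)

lemma invertible_el_scaleC_iff:
  assumes "c \<noteq> 0"
  shows "invertible_el (scaleC c x) \<longleftrightarrow> invertible_el (x::'a::cstar_algebra)"
proof -
  have "invertible_el (scaleC c y)" if "invertible_el y" "c \<noteq> 0" for y :: 'a and c
    by (rule invertible_elI[of _ "scaleC (1/c) (inv_el y)"])
       (use that in \<open>simp_all add: scaleC_mult_left scaleC_mult_right scaleC_scaleC inv_el_left inv_el_right\<close>)
  from this[of x c] this[of "scaleC c x" "1/c"] show ?thesis
    using assms by (auto simp: scaleC_scaleC)
qed

lemma invertible_el_scaleR_iff:
  "r \<noteq> 0 \<Longrightarrow> invertible_el (scaleR r x) \<longleftrightarrow> invertible_el (x::'a::cstar_algebra)"
  by (metis invertible_el_scaleC_iff of_real_eq_0_iff scaleC_of_real)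

lemma neumann_series:
  fixes x :: "'a::cstar_algebra"
  assumes x: "norm x < 1"
  shows "invertible_el (1 - x)" "norm (inv_el (1 - x) - 1) \<le> norm x / (1 - norm x)"
proof -
  have sg: "summable (\<lambda>n. norm x ^ n)" using x by (simp add: summable_geometric)
  have sn: "summable (\<lambda>n. norm (x ^ n))"
    by (rule summable_comparison_test[OF _ sg]) (auto simp: norm_power_ineq)
  have s: "summable (\<lambda>n. x ^ n)" using sn by (rule summable_norm_cancel)
  define S where "S = (\<Sum>n. x ^ n)"
  have tail: "(\<Sum>n. x ^ Suc n) = S - 1" unfolding S_def using suminf_split_head[OF s] by simp
  have "x * S = (\<Sum>n. x ^ Suc n)" "S * x = (\<Sum>n. x ^ Suc n)"
    unfolding S_def using suminf_mult[OF s, of x] suminf_mult2[OF s, of x] by (simp_all add: power_commutes)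
  then have l: "(1 - x) * S = 1" and r: "S * (1 - x) = 1" using tail by (simp_all add: algebra_simps)
  show "invertible_el (1 - x)" using l r by (rule invertible_elI)
  have sn1: "summable (\<lambda>n. norm (x ^ Suc n))" using sn by (rule summable_Suc_iff[THEN iffD2])
  have "norm (S - 1) \<le> (\<Sum>n. norm (x ^ Suc n))" using summable_norm[OF sn1] tail by simp
  also have "\<dots> \<le> (\<Sum>n. norm x ^ Suc n)"
    by (rule suminf_le[OF _ sn1 summable_Suc_iff[THEN iffD2, OF sg]]) (rule norm_power_ineq)
  also have "\<dots> = norm x / (1 - norm x)"
    using suminf_mult[OF sg, of "norm x"] x by (simp add: suminf_geometric)
  finally show "norm (inv_el (1 - x) - 1) \<le> norm x / (1 - norm x)"
    using inv_el_unique[OF l r] by simp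
qed

lemma invertible_el_near:
  fixes a b :: "'a::cstar_algebra"
  assumes a: "invertible_el a" and k: "norm (inv_el a) * norm (b - a) < 1"
  shows "invertible_el b"
    "norm (inv_el b - inv_el a)
       \<le> norm (inv_el a) ^ 2 * norm (b - a) / (1 - norm (inv_el a) * norm (b - a))"
proof -
  define u where "u = inv_el a * (a - b)"
  define k where "k = norm (inv_el a) * norm (b - a)"
  have nu: "norm u \<le> k" unfolding u_def k_def by (metis norm_minus_commute norm_mult_ineq)
  have u1: "norm u < 1" using nu k k_def by simp
  have b: "b = a * (1 - u)" unfolding u_def by (simp add: algebra_simps inv_el_right[OF a] flip: mult.assoc)
  note N = neumann_series[OF u1]
  show "invertible_el b" using b invertible_el_mult[OF a N(1)] by simp
  have "inv_el b = inv_el (1 - u) * inv_el a" unfolding b by (rule invertible_el_mult(2)[OF a N(1)])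
  then have "inv_el b - inv_el a = (inv_el (1 - u) - 1) * inv_el a" by (simp add: algebra_simps)
  then have "norm (inv_el b - inv_el a) \<le> norm (inv_el (1 - u) - 1) * norm (inv_el a)"
    by (simp add: norm_mult_ineq)
  also have "\<dots> \<le> k / (1 - k) * norm (inv_el a)"
    using N(2) nu u1 k k_def by (intro mult_right_mono order.trans[OF _ frac_le[of k "norm u"]]) auto
  finally show "norm (inv_el b - inv_el a)
      \<le> norm (inv_el a) ^ 2 * norm (b - a) / (1 - norm (inv_el a) * norm (b - a))"
    unfolding k_def by (simp add: power2_eq_square mult_ac)
qed

lemma tendsto_inv_el:
  fixes g :: "'b \<Rightarrow> 'a::cstar_algebra"
  assumes g: "(g \<longlongrightarrow> a) F" and a: "invertible_el a"
  shows "((\<lambda>z. inv_el (g z)) \<longlongrightarrow> inv_el a) F"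
proof -
  define M where "M = norm (inv_el a)"
  have M: "M > 0" unfolding M_def using inv_el_right[OF a] by (metis mult_zero_right zero_less_norm_iff zero_neq_one)
  have "eventually (\<lambda>z. norm (g z - a) < 1 / (2 * M)) F"
    using g[unfolded tendsto_iff, rule_format, of "1 / (2 * M)"] M by (simp add: dist_norm)
  then have ev: "eventually (\<lambda>z. norm (inv_el (g z) - inv_el a) \<le> 2 * M ^ 2 * norm (g z - a)) F"
  proof eventually_elim
    case (elim z)
    then have k: "M * norm (g z - a) < 1/2" using M by (simp add: field_simps)
    have "norm (inv_el (g z) - inv_el a) \<le> M ^ 2 * norm (g z - a) / (1 - M * norm (g z - a))"
      using invertible_el_near(2)[OF a] k unfolding M_def by simp
    also have "\<dots> \<le> M ^ 2 * norm (g z - a) / (1/2)"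
      using k by (intro divide_left_mono) auto
    finally show ?case by simp
  qed
  have "((\<lambda>z. 2 * M ^ 2 * norm (g z - a)) \<longlongrightarrow> 0) F"
    using tendsto_norm_zero[OF LIM_zero[OF g]] by (rule tendsto_mult_right_zero)
  then show ?thesis
    by (rule LIM_zero_cancel[OF Lim_null_comparison[OF ev]])
qed

section \<open>Spectral radius of self-adjoint elements\<close>

lemma invertible_el_scaleC_one_minus:
  fixes y :: "'a::cstar_algebra"
  assumes "norm y < cmod \<mu>"
  shows "invertible_el (scaleC \<mu> 1 - y)"
proof -
  have \<mu>: "\<mu> \<noteq> 0" using assms by auto
  have "norm (scaleC (1/\<mu>) y) < 1" using assms \<mu> by (simp add: norm_scaleC norm_divide field_simps)
  moreover have "scaleC \<mu> 1 - y = scaleC \<mu> (1 - scaleC (1/\<mu>) y)"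
    using \<mu> by (simp add: scaleC_diff_right scaleC_scaleC)
  ultimately show ?thesis using neumann_series(1) invertible_el_scaleC_iff[OF \<mu>] by metis
qed

lemma invertible_el_of_real_minus:
  "norm y < \<bar>t\<bar> \<Longrightarrow> invertible_el (of_real t - y :: 'a::cstar_algebra)"
  using invertible_el_scaleC_one_minus[of y "complex_of_real t"] by (simp add: scaleC_of_real_one)

lemma norm_self_adjoint_add_imaginary:
  fixes h :: "'a::cstar_algebra"
  assumes h: "adj h = h"
  shows "norm (h + scaleC (\<i> * complex_of_real t) 1) ^ 2 \<le> norm h ^ 2 + t ^ 2"
proof -
  define a :: 'a where "a = scaleC (\<i> * complex_of_real t) 1"
  have "adj a = - a" unfolding a_def by (simp add: adj_scaleC scaleC_minus_left)
  moreover have "a * a = - of_real (t ^ 2)"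
  proof -
    have "a * a = scaleC ((\<i> * complex_of_real t) * (\<i> * complex_of_real t)) 1"
      unfolding a_def by (simp add: scaleC_mult_left scaleC_scaleC)
    also have "(\<i> * complex_of_real t) * (\<i> * complex_of_real t) = - complex_of_real (t ^ 2)"
      by (simp add: power2_eq_square algebra_simps)
    finally show ?thesis by (simp only: scaleC_minus_left scaleC_of_real_one)
  qed
  moreover have "a * h = h * a" unfolding a_def by (rule scaleC_one_mult_commute)
  ultimately have "adj (h + a) * (h + a) = h * h + of_real (t ^ 2)"
    using h by (simp add: algebra_simps)
  then have "norm (h + a) ^ 2 = norm (h * h + of_real (t ^ 2))" by (metis cstar_identity)
  also have "\<dots> \<le> norm (h * h) + norm (of_real (t ^ 2) :: 'a)" by (rule norm_triangle_ineq)
  also have "\<dots> \<le> norm h ^ 2 + t ^ 2"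
    using norm_mult_ineq[of h h] by (simp only: norm_of_real abs_power2 power2_eq_square) simp
  finally show ?thesis unfolding a_def .
qed

lemma self_adjoint_nonreal_invertible:
  fixes h :: "'a::cstar_algebra"
  assumes h: "adj h = h" and l: "Im l \<noteq> 0"
  shows "invertible_el (scaleC l 1 - h)"
proof (rule ccontr)
  assume ni: "\<not> invertible_el (scaleC l 1 - h)"
  define t where "t = (norm h ^ 2 + 1) / (2 * Im l)"
  define \<mu> where "\<mu> = l + \<i> * complex_of_real t"
  have "scaleC \<mu> 1 - (h + scaleC (\<i> * complex_of_real t) 1) = scaleC l 1 - h"
    unfolding \<mu>_def by (simp add: scaleC_add_left)
  then have "cmod \<mu> \<le> norm (h + scaleC (\<i> * complex_of_real t) 1)"
    using ni invertible_el_scaleC_one_minus by (metis not_le)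
  then have "cmod \<mu> ^ 2 \<le> norm (h + scaleC (\<i> * complex_of_real t) 1) ^ 2"
    by (rule power_mono) simp
  also have "\<dots> \<le> norm h ^ 2 + t ^ 2" by (rule norm_self_adjoint_add_imaginary[OF h])
  finally have "cmod \<mu> ^ 2 \<le> norm h ^ 2 + t ^ 2" .
  moreover have "cmod \<mu> ^ 2 = Re l ^ 2 + Im l ^ 2 + (norm h ^ 2 + 1) + t ^ 2"
    unfolding \<mu>_def cmod_power2 using l by (simp add: t_def power2_eq_square field_simps)
  ultimately show False by (smt (verit) zero_le_power2)
qed

text \<open>The spectral radius formula is proved without holomorphic functional calculus. Suppose
  1 - l x is invertible for all cmod l \<le> R, and let G k z be the inverse of 1 - (z x)^(2^k). With
  \<omega>^(2^k) = -1 one has G (k+1) z = G k (\<omega> z) * G k z = (G k z + G k (\<omega> z)) / 2, so by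
  induction the G k are uniformly bounded and equicontinuous on the disc. For large k the two
  factors are therefore close, G k is almost idempotent, and since G k 0 = 1 continuity keeps
  G k R close to 1; this means R^(2^k) * norm (x^(2^k)) < 1.\<close>

definition root_of_minus_one :: "nat \<Rightarrow> complex" where
  "root_of_minus_one k = exp (\<i> * complex_of_real (pi / 2 ^ k))"

lemma root_of_minus_one_pow: "root_of_minus_one k ^ 2 ^ k = -1"
  unfolding root_of_minus_one_def exp_of_nat_mult[symmetric] by simp

lemma norm_root_of_minus_one [simp]: "cmod (root_of_minus_one k) = 1"
  unfolding root_of_minus_one_def by simp

lemma norm_root_of_minus_one_minus_one: "cmod (root_of_minus_one k - 1) \<le> pi / 2 ^ k"
proof -
  have "cmod (root_of_minus_one k - 1) = 2 * \<bar>sin (pi / 2 ^ k / 2)\<bar>"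
    unfolding root_of_minus_one_def by (rule dist_exp_i_1)
  also have "\<dots> \<le> 2 * \<bar>pi / 2 ^ k / 2\<bar>" by (intro mult_left_mono abs_sin_x_le_abs_x) simp
  finally show ?thesis by simp
qed

definition dyadic_resolvent :: "'a::cstar_algebra \<Rightarrow> nat \<Rightarrow> complex \<Rightarrow> 'a" where
  "dyadic_resolvent x k z = inv_el (1 - scaleC (z ^ 2 ^ k) (x ^ 2 ^ k))"

lemma inv_el_one_minus_square:
  fixes w :: "'a::cstar_algebra"
  assumes "invertible_el (1 - w)" "invertible_el (1 + w)"
  shows "invertible_el (1 - w * w)"
    "inv_el (1 - w * w) = inv_el (1 + w) * inv_el (1 - w)"
    "inv_el (1 - w * w) = scaleR (1/2) (inv_el (1 - w) + inv_el (1 + w))"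
proof -
  have factor: "1 - w * w = (1 - w) * (1 + w)" "1 - w * w = (1 + w) * (1 - w)"
    by (simp_all add: algebra_simps)
  show "invertible_el (1 - w * w)" using factor(1) invertible_el_mult[OF assms] by simp
  show "inv_el (1 - w * w) = inv_el (1 + w) * inv_el (1 - w)"
    using factor(1) invertible_el_mult(2)[OF assms] by simp
  have "inv_el (1 - w) + inv_el (1 + w)
      = inv_el (1 - w) * ((1 + w) * inv_el (1 + w)) + (inv_el (1 - w) * (1 - w)) * inv_el (1 + w)"
    using assms by (simp add: inv_el_left inv_el_right)
  also have "\<dots> = scaleR 2 (inv_el (1 - w) * inv_el (1 + w))"
    by (simp add: algebra_simps scaleR_2)
  also have "inv_el (1 - w) * inv_el (1 + w) = inv_el (1 - w * w)"
    using factor(2) invertible_el_mult(2)[OF assms(2,1)] by simp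
  finally show "inv_el (1 - w * w) = scaleR (1/2) (inv_el (1 - w) + inv_el (1 + w))" by simp
qed

lemma norm_square_minus_self_le:
  fixes a b :: "'a::real_normed_algebra"
  assumes "b * a = scaleR (1/2) (a + b)"
  shows "norm (a * a - a) \<le> norm (b - a) * (norm a + 1/2)"
proof -
  have "scaleR (1/2) (a + b) - a = scaleR (1/2) (b - a)"
    by (metis add_diff_cancel_left scaleR_diff_right scaleR_half_double)
  then have "a * a - a = (a - b) * a + scaleR (1/2) (b - a)"
    using assms by (simp add: algebra_simps)
  then have "norm (a * a - a) \<le> norm (b - a) * norm a + norm (b - a) / 2"
    using norm_triangle_ineq[of "(a - b) * a" "scaleR (1/2) (b - a)"] norm_mult_ineq[of "a - b" a]
    by (simp add: norm_minus_commute)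
  then show ?thesis by (simp add: algebra_simps)
qed

context
  fixes x :: "'a::cstar_algebra" and R :: real
  assumes R: "R > 0" and invertible_disk: "\<And>l. cmod l \<le> R \<Longrightarrow> invertible_el (1 - scaleC l x)"
begin

lemma invertible_one_minus_dyadic:
  "cmod z \<le> R \<Longrightarrow> invertible_el (1 - scaleC (z ^ 2 ^ k) (x ^ 2 ^ k))"
proof (induction k arbitrary: z)
  case 0
  then show ?case using invertible_disk by simp
next
  case (Suc k)
  define w where "w = scaleC (z ^ 2 ^ k) (x ^ 2 ^ k)"
  have "1 + w = 1 - scaleC ((root_of_minus_one k * z) ^ 2 ^ k) (x ^ 2 ^ k)"
    unfolding w_def by (simp add: power_mult_distrib root_of_minus_one_pow scaleC_minus_left)
  then have "invertible_el (1 + w)" using Suc by (simp add: norm_mult)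
  moreover have "invertible_el (1 - w)" unfolding w_def using Suc by simp
  moreover have "w * w = scaleC (z ^ 2 ^ Suc k) (x ^ 2 ^ Suc k)"
    unfolding w_def by (simp add: scaleC_mult_left scaleC_mult_right scaleC_scaleC
        power_add[symmetric] mult_2)
  ultimately show ?case using inv_el_one_minus_square(1) by metis
qed

lemma dyadic_resolvent_Suc:
  fixes k :: nat
  assumes z: "cmod z \<le> R"
  defines "z' \<equiv> root_of_minus_one k * z"
  shows "dyadic_resolvent x (Suc k) z = dyadic_resolvent x k z' * dyadic_resolvent x k z"
    "dyadic_resolvent x (Suc k) z = scaleR (1/2) (dyadic_resolvent x k z + dyadic_resolvent x k z')"
proof -
  define w where "w = scaleC (z ^ 2 ^ k) (x ^ 2 ^ k)"
  have plus: "1 - scaleC (z' ^ 2 ^ k) (x ^ 2 ^ k) = 1 + w"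
    unfolding w_def z'_def by (simp add: power_mult_distrib root_of_minus_one_pow scaleC_minus_left)
  have "invertible_el (1 - scaleC (z' ^ 2 ^ k) (x ^ 2 ^ k))"
    using z invertible_one_minus_dyadic unfolding z'_def by (simp add: norm_mult)
  then have inv: "invertible_el (1 - w)" "invertible_el (1 + w)"
    using z invertible_one_minus_dyadic plus unfolding w_def by auto
  have sq: "1 - scaleC (z ^ 2 ^ Suc k) (x ^ 2 ^ Suc k) = 1 - w * w"
    unfolding w_def by (simp add: scaleC_mult_left scaleC_mult_right scaleC_scaleC
        power_add[symmetric] mult_2)
  show "dyadic_resolvent x (Suc k) z = dyadic_resolvent x k z' * dyadic_resolvent x k z"
    "dyadic_resolvent x (Suc k) z = scaleR (1/2) (dyadic_resolvent x k z + dyadic_resolvent x k z')"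
    unfolding dyadic_resolvent_def sq plus using inv_el_one_minus_square[OF inv] by (simp_all add: w_def)
qed

lemma continuous_on_dyadic_resolvent: "continuous_on (cball 0 R) (dyadic_resolvent x k)"
  unfolding continuous_on_def dyadic_resolvent_def
proof
  fix z :: complex assume "z \<in> cball 0 R"
  then show "((\<lambda>z. inv_el (1 - scaleC (z ^ 2 ^ k) (x ^ 2 ^ k)))
      \<longlongrightarrow> inv_el (1 - scaleC (z ^ 2 ^ k) (x ^ 2 ^ k))) (at z within cball 0 R)"
    using invertible_one_minus_dyadic
    by (intro tendsto_inv_el tendsto_diff tendsto_const tendsto_power tendsto_ident_at
        bounded_linear.tendsto[OF bounded_linear_scaleC_left]) auto
qed

lemma dyadic_resolvent_bounded: "\<exists>M. \<forall>k z. cmod z \<le> R \<longrightarrow> norm (dyadic_resolvent x k z) \<le> M"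
proof -
  have "bounded (dyadic_resolvent x 0 ` cball 0 R)"
    by (intro compact_imp_bounded compact_continuous_image continuous_on_dyadic_resolvent compact_cball)
  then obtain M where "\<forall>z \<in> cball 0 R. norm (dyadic_resolvent x 0 z) \<le> M"
    unfolding bounded_iff by auto
  then have M: "\<And>z. cmod z \<le> R \<Longrightarrow> norm (dyadic_resolvent x 0 z) \<le> M" by auto
  have "cmod z \<le> R \<Longrightarrow> norm (dyadic_resolvent x k z) \<le> M" for k z
  proof (induction k arbitrary: z)
    case (Suc k)
    let ?\<omega> = "root_of_minus_one k"
    have "norm (dyadic_resolvent x (Suc k) z)
        = norm (dyadic_resolvent x k z + dyadic_resolvent x k (?\<omega> * z)) / 2"
      using Suc.prems by (simp add: dyadic_resolvent_Suc(2))
    also have "\<dots> \<le> (norm (dyadic_resolvent x k z) + norm (dyadic_resolvent x k (?\<omega> * z))) / 2"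
      by (intro divide_right_mono norm_triangle_ineq) simp
    also have "\<dots> \<le> M" using Suc.IH[of z] Suc.IH[of "?\<omega> * z"] Suc.prems by (simp add: norm_mult)
    finally show ?case .
  qed (rule M)
  then show ?thesis by blast
qed

lemma dyadic_resolvent_equicontinuous:
  assumes e: "e > 0"
  shows "\<exists>d>0. \<forall>k z z'. cmod z \<le> R \<longrightarrow> cmod z' \<le> R \<longrightarrow> cmod (z' - z) < d
      \<longrightarrow> norm (dyadic_resolvent x k z' - dyadic_resolvent x k z) \<le> e"
proof -
  have "uniformly_continuous_on (cball 0 R) (dyadic_resolvent x 0)"
    by (intro compact_uniformly_continuous continuous_on_dyadic_resolvent compact_cball)
  then obtain d where d: "d > 0" and base: "\<And>z z'. cmod z \<le> R \<Longrightarrow> cmod z' \<le> R \<Longrightarrow> cmod (z' - z) < d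
      \<Longrightarrow> norm (dyadic_resolvent x 0 z' - dyadic_resolvent x 0 z) \<le> e"
    using e by (elim uniformly_continuous_onE) (auto simp: dist_norm less_imp_le)
  have "norm (dyadic_resolvent x k z' - dyadic_resolvent x k z) \<le> e"
    if "cmod z \<le> R" "cmod z' \<le> R" "cmod (z' - z) < d" for k z z'
    using that
  proof (induction k arbitrary: z z')
    case (Suc k)
    let ?\<omega> = "root_of_minus_one k"
    have "cmod (?\<omega> * z' - ?\<omega> * z) < d" using Suc.prems by (simp add: norm_mult flip: right_diff_distrib)
    then have "norm (dyadic_resolvent x k (?\<omega> * z') - dyadic_resolvent x k (?\<omega> * z)) \<le> e"
      using Suc by (simp add: norm_mult)
    moreover have "norm (dyadic_resolvent x k z' - dyadic_resolvent x k z) \<le> e" using Suc by blast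
    moreover have "dyadic_resolvent x (Suc k) z' - dyadic_resolvent x (Suc k) z
        = scaleR (1/2) ((dyadic_resolvent x k z' - dyadic_resolvent x k z)
            + (dyadic_resolvent x k (?\<omega> * z') - dyadic_resolvent x k (?\<omega> * z)))"
      using Suc.prems by (simp add: dyadic_resolvent_Suc(2) algebra_simps)
    ultimately show ?case
      using norm_triangle_ineq[of "dyadic_resolvent x k z' - dyadic_resolvent x k z"
          "dyadic_resolvent x k (?\<omega> * z') - dyadic_resolvent x k (?\<omega> * z)"]
      by simp
  qed (rule base)
  then show ?thesis using d by blast
qed

lemma dyadic_resolvent_almost_idempotent:
  assumes \<delta>: "\<delta> > 0"
  shows "\<exists>k. \<forall>z. cmod z \<le> R \<longrightarrow>
    norm (dyadic_resolvent x k z * dyadic_resolvent x k z - dyadic_resolvent x k z) \<le> \<delta>"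
proof -
  obtain M where M: "\<And>k z. cmod z \<le> R \<Longrightarrow> norm (dyadic_resolvent x k z) \<le> M"
    using dyadic_resolvent_bounded by blast
  have "norm (dyadic_resolvent x 0 0) \<le> M" using M R by simp
  then have "M \<ge> 0" using norm_ge_zero[of "dyadic_resolvent x 0 0"] by linarith
  define e where "e = \<delta> / (M + 1)"
  have e: "e > 0" "e * (M + 1) = \<delta>" unfolding e_def using \<delta> \<open>M \<ge> 0\<close> by simp_all
  obtain d where d: "d > 0" and close: "\<And>k z z'. cmod z \<le> R \<Longrightarrow> cmod z' \<le> R \<Longrightarrow> cmod (z' - z) < d
      \<Longrightarrow> norm (dyadic_resolvent x k z' - dyadic_resolvent x k z) \<le> e"
    using dyadic_resolvent_equicontinuous[OF e(1)] by blast
  obtain k :: nat where "pi * R / d < 2 ^ k" using real_arch_pow[of 2] by auto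
  then have k: "pi / 2 ^ k * R < d" using d by (simp add: field_simps)
  have "norm (dyadic_resolvent x k z * dyadic_resolvent x k z - dyadic_resolvent x k z) \<le> \<delta>"
    if z: "cmod z \<le> R" for z
  proof -
    define a where "a = dyadic_resolvent x k z"
    define b where "b = dyadic_resolvent x k (root_of_minus_one k * z)"
    have "cmod (root_of_minus_one k * z - z) = cmod (root_of_minus_one k - 1) * cmod z"
      using norm_mult[of "root_of_minus_one k - 1" z] by (simp add: left_diff_distrib)
    also have "\<dots> \<le> pi / 2 ^ k * R"
      using norm_root_of_minus_one_minus_one z by (intro mult_mono) auto
    finally have "norm (b - a) \<le> e" unfolding a_def b_def using k z by (intro close) (auto simp: norm_mult)
    have "b * a = scaleR (1/2) (a + b)"
      unfolding a_def b_def using dyadic_resolvent_Suc[OF z, of k] by metis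
    then have "norm (a * a - a) \<le> norm (b - a) * (norm a + 1/2)" by (rule norm_square_minus_self_le)
    also have "\<dots> \<le> e * (M + 1)"
      using \<open>norm (b - a) \<le> e\<close> M[OF z, of k] e by (intro mult_mono) (auto simp: a_def)
    also have "\<dots> = \<delta>" by (rule e(2))
    finally show ?thesis unfolding a_def .
  qed
  then show ?thesis by blast
qed

lemma dyadic_power_small: "\<exists>k. R ^ 2 ^ k * norm (x ^ 2 ^ k) < 1"
proof -
  obtain k where idem: "\<And>z. cmod z \<le> R
      \<Longrightarrow> norm (dyadic_resolvent x k z * dyadic_resolvent x k z - dyadic_resolvent x k z) \<le> 1/8"
    using dyadic_resolvent_almost_idempotent[of "1/8"] by auto
  define \<phi> where "\<phi> r = norm (1 - dyadic_resolvent x k (complex_of_real r))" for r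
  have gap: "\<phi> r \<noteq> 1/2" if "0 \<le> r" "r \<le> R" for r
  proof
    assume half: "\<phi> r = 1/2"
    define y where "y = 1 - dyadic_resolvent x k (complex_of_real r)"
    have "y * y - y = dyadic_resolvent x k r * dyadic_resolvent x k r - dyadic_resolvent x k r"
      unfolding y_def by (simp add: algebra_simps)
    then have "norm (y * y - y) \<le> 1/8" using idem[of r] that by simp
    then have "norm y \<le> norm y * norm y + 1/8"
      using norm_triangle_ineq4[of "y * y" "y * y - y"] norm_mult_ineq[of y y] by simp
    then show False using half unfolding \<phi>_def y_def by simp
  qed
  have "continuous_on {0..R} (\<lambda>r. dyadic_resolvent x k (complex_of_real r))"
    by (rule continuous_on_compose2[OF continuous_on_dyadic_resolvent continuous_on_of_real_id]) auto
  then have "continuous_on {0..R} \<phi>"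
    unfolding \<phi>_def by (intro continuous_on_norm continuous_on_diff continuous_on_const)
  moreover have "\<phi> 0 = 0" by (simp add: \<phi>_def dyadic_resolvent_def power_0_left)
  ultimately have small: "\<phi> R < 1/2"
    using IVT'[of \<phi> 0 "1/2" R] R gap by force
  let ?u = "1 - dyadic_resolvent x k (complex_of_real R)"
  have "inv_el (1 - ?u) = 1 - scaleC (complex_of_real R ^ 2 ^ k) (x ^ 2 ^ k)"
    unfolding dyadic_resolvent_def using R by (simp add: inv_el_inv_el invertible_one_minus_dyadic)
  then have "R ^ 2 ^ k * norm (x ^ 2 ^ k) = norm (inv_el (1 - ?u) - 1)"
    using R by (simp add: norm_scaleC norm_power)
  also have "\<dots> \<le> norm ?u / (1 - norm ?u)"
    using small unfolding \<phi>_def by (intro neumann_series(2)) simp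
  also have "\<dots> < 1" using small unfolding \<phi>_def by (simp add: field_simps)
  finally show ?thesis by blast
qed

end

lemma norm_power2_self_adjoint:
  fixes h :: "'a::cstar_algebra"
  assumes "adj h = h"
  shows "norm (h ^ 2 ^ k) = norm h ^ 2 ^ k"
proof (induction k)
  case (Suc k)
  have "h ^ 2 ^ Suc k = adj (h ^ 2 ^ k) * h ^ 2 ^ k"
    using assms by (simp add: mult_2 power_add)
  then have "norm (h ^ 2 ^ Suc k) = norm (h ^ 2 ^ k) ^ 2" by (simp only: cstar_identity)
  then show ?case using Suc by (simp add: mult_2 power_add power2_eq_square)
qed simp

lemma self_adjoint_invertible_outside:
  fixes h :: "'a::cstar_algebra"
  assumes h: "adj h = h" and real: "\<And>t. \<bar>t\<bar> > c \<Longrightarrow> invertible_el (of_real t - h)"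
    and \<mu>: "cmod \<mu> > c"
  shows "invertible_el (scaleC \<mu> 1 - h)"
proof (cases "Im \<mu> = 0")
  case True
  then have "\<mu> = complex_of_real (Re \<mu>)" by (simp add: complex_eq_iff)
  then show ?thesis using real[of "Re \<mu>"] \<mu> by (metis norm_of_real scaleC_of_real_one)
qed (rule self_adjoint_nonreal_invertible[OF h])

theorem self_adjoint_norm_le_spectral_bound:
  fixes h :: "'a::cstar_algebra"
  assumes h: "adj h = h" and c: "c > 0"
    and real: "\<And>t. \<bar>t\<bar> > c \<Longrightarrow> invertible_el (of_real t - h)"
  shows "norm h \<le> c"
proof (rule ccontr)
  assume "\<not> norm h \<le> c"
  then have hc: "norm h > c" by simp
  then have h0: "h \<noteq> 0" using c by auto
  have disk: "invertible_el (1 - scaleC l h)" if l: "cmod l \<le> 1 / norm h" for l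
  proof (cases "l = 0")
    case False
    have "c * cmod l \<le> c * (1 / norm h)" using l c by (intro mult_left_mono) auto
    also have "\<dots> < 1" using hc c by (simp add: divide_less_eq_1)
    finally have "cmod (1 / l) > c" using False by (simp add: norm_divide field_simps)
    then have "invertible_el (scaleC l (scaleC (1 / l) 1 - h))"
      using self_adjoint_invertible_outside[OF h real] invertible_el_scaleC_iff[OF False] by blast
    then show ?thesis using False by (simp add: scaleC_diff_right scaleC_scaleC)
  qed simp
  moreover have "1 / norm h > 0" using h0 by simp
  ultimately obtain k where "(1 / norm h) ^ 2 ^ k * norm (h ^ 2 ^ k) < 1"
    using dyadic_power_small[of "1 / norm h" h] by blast
  then show False using h0 by (simp add: norm_power2_self_adjoint[OF h] power_one_over)
qed

section \<open>Positive elements\<close>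

definition spectrally_positive :: "'a::cstar_algebra \<Rightarrow> bool" where
  "spectrally_positive a \<longleftrightarrow> adj a = a \<and> (\<forall>t::real. t < 0 \<longrightarrow> invertible_el (of_real t - a))"

lemma spectrally_positive_adj: "spectrally_positive a \<Longrightarrow> adj a = a"
  unfolding spectrally_positive_def by blast

lemma spectrally_positive_invertible: "spectrally_positive a \<Longrightarrow> t < 0 \<Longrightarrow> invertible_el (of_real t - a)"
  unfolding spectrally_positive_def by blast

lemma spectrally_positive_invertible_neg:
  assumes "spectrally_positive (- p)" "t > 0"
  shows "invertible_el (of_real t - p)"
proof -
  have "invertible_el (of_real (- t) - (- p))" using assms by (intro spectrally_positive_invertible) auto
  moreover have "of_real (- t) - (- p) = - (of_real t - p)" by simp
  ultimately show ?thesis using invertible_el_minus_iff by metis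
qed

lemma spectrally_positive_invertible_one_plus:
  assumes "spectrally_positive a"
  shows "invertible_el (1 + a)"
proof -
  have "invertible_el (of_real (- 1) - a)" using assms by (intro spectrally_positive_invertible) auto
  moreover have "of_real (- 1) - a = - (1 + a)" by simp
  ultimately show ?thesis using invertible_el_minus_iff by metis
qed

text \<open>For self-adjoint a with norm a \<le> t, positivity is equivalent to norm (t - a) \<le> t;
  this turns positivity into a convex, norm-closed condition.\<close>

lemma spectrally_positive_norm_le:
  fixes a :: "'a::cstar_algebra"
  assumes a: "spectrally_positive a" and t: "norm a \<le> t"
  shows "norm (of_real t - a) \<le> t"
proof (cases "t = 0")
  case False
  then have t0: "t > 0" using t norm_ge_zero[of a] by linarith
  show ?thesis
  proof (rule self_adjoint_norm_le_spectral_bound[OF _ t0])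
    show "adj (of_real t - a) = of_real t - a" using spectrally_positive_adj[OF a] by simp
    fix \<mu> :: real assume \<mu>: "\<bar>\<mu>\<bar> > t"
    have e: "of_real \<mu> - (of_real t - a) = - (of_real (t - \<mu>) - a)" by (simp add: algebra_simps)
    show "invertible_el (of_real \<mu> - (of_real t - a))"
    proof (cases "\<mu> > 0")
      case True
      then have "t - \<mu> < 0" using \<mu> by linarith
      then show ?thesis unfolding e invertible_el_minus_iff by (rule spectrally_positive_invertible[OF a])
    next
      case False
      then have "norm a < \<bar>t - \<mu>\<bar>" using \<mu> t t0 by linarith
      then show ?thesis unfolding e invertible_el_minus_iff by (rule invertible_el_of_real_minus)
    qed
  qed
next
  case True
  then show ?thesis using t by simp
qed

lemma spectrally_positiveI_norm:
  fixes a :: "'a::cstar_algebra"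
  assumes a: "adj a = a" and t: "norm (of_real t - a) \<le> t"
  shows "spectrally_positive a"
  unfolding spectrally_positive_def
proof (intro conjI allI impI a)
  fix s :: real assume "s < 0"
  then have "norm (a - of_real t) < \<bar>s - t\<bar>" using t by (simp add: norm_minus_commute)
  then have "invertible_el (of_real (s - t) - (a - of_real t))" by (rule invertible_el_of_real_minus)
  then show "invertible_el (of_real s - a)" by (simp add: algebra_simps)
qed

lemma spectrally_positive_add:
  assumes a: "spectrally_positive a" and b: "spectrally_positive b"
  shows "spectrally_positive (a + b)"
proof (rule spectrally_positiveI_norm)
  show "adj (a + b) = a + b" using a b by (simp add: spectrally_positive_adj)
  have "norm (of_real (norm a + norm b) - (a + b))
      \<le> norm (of_real (norm a) - a) + norm (of_real (norm b) - b)"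
    by (metis add_diff_add norm_triangle_ineq of_real_add)
  also have "\<dots> \<le> norm a + norm b"
    using spectrally_positive_norm_le[OF a order_refl] spectrally_positive_norm_le[OF b order_refl] by simp
  finally show "norm (of_real (norm a + norm b) - (a + b)) \<le> norm a + norm b" .
qed

lemma spectrally_positive_scaleR:
  assumes a: "spectrally_positive a" and c: "c \<ge> 0"
  shows "spectrally_positive (scaleR c a)"
proof (rule spectrally_positiveI_norm)
  show "adj (scaleR c a) = scaleR c a" using a by (simp add: spectrally_positive_adj)
  have "of_real (c * norm a) - scaleR c a = scaleR c (of_real (norm a) - a)"
    by (simp add: scaleR_diff_right of_real_def)
  then show "norm (of_real (c * norm a) - scaleR c a) \<le> c * norm a"
    using spectrally_positive_norm_le[OF a order_refl] c by (simp add: mult_left_mono)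
qed

lemma spectrally_positive_one: "spectrally_positive (1::'a::cstar_algebra)"
  by (rule spectrally_positiveI_norm[where t=1]) simp_all

lemma spectrally_positive_square:
  fixes h :: "'a::cstar_algebra"
  assumes h: "adj h = h"
  shows "spectrally_positive (h * h)"
  unfolding spectrally_positive_def
proof (intro conjI allI impI)
  show "adj (h * h) = h * h" using h by simp
  fix s :: real assume s: "s < 0"
  define \<alpha> :: 'a where "\<alpha> = scaleC (\<i> * complex_of_real (sqrt (- s))) 1"
  have inv: "invertible_el (\<alpha> - h)" "invertible_el (- \<alpha> - h)"
    unfolding \<alpha>_def scaleC_minus_left[symmetric] using s
    by (auto intro: self_adjoint_nonreal_invertible[OF h])
  have "\<alpha> * \<alpha> = of_real s"
  proof -
    have "(\<i> * complex_of_real (sqrt (- s))) * (\<i> * complex_of_real (sqrt (- s))) = complex_of_real s"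
      using s by (simp add: algebra_simps flip: of_real_mult)
    then show ?thesis
      unfolding \<alpha>_def by (simp add: scaleC_mult_left scaleC_scaleC scaleC_of_real_one)
  qed
  moreover have "\<alpha> * h = h * \<alpha>" unfolding \<alpha>_def by (rule scaleC_one_mult_commute)
  ultimately have "(\<alpha> - h) * (- \<alpha> - h) = - (of_real s - h * h)" by (simp add: algebra_simps)
  then have "invertible_el (- (of_real s - h * h))" using invertible_el_mult(1)[OF inv] by metis
  then show "invertible_el (of_real s - h * h)" by (simp only: invertible_el_minus_iff)
qed

definition sqrt_coeff :: "nat \<Rightarrow> real" where
  "sqrt_coeff n = ((1/2::real) gchoose n) * (-1) ^ n"

lemma sqrt_coeff_0 [simp]: "sqrt_coeff 0 = 1"
  unfolding sqrt_coeff_def by simp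

lemma sqrt_coeff_Suc_nonpos: "sqrt_coeff (Suc n) \<le> 0"
proof -
  have "sqrt_coeff (Suc n) = (-1/2) * pochhammer (1/2) n / fact (Suc n)"
    unfolding sqrt_coeff_def gbinomial_pochhammer pochhammer_rec
    by (simp add: field_simps flip: power_add)
  then show ?thesis by (simp add: divide_nonpos_pos mult_nonpos_nonneg pochhammer_nonneg)
qed

lemma sum_sqrt_coeff_nonneg: "(\<Sum>k\<le>N. sqrt_coeff k) \<ge> 0"
proof -
  have "(\<Sum>k\<le>N. sqrt_coeff k) = (-1) ^ N * (- (1/2::real) gchoose N)"
    unfolding sqrt_coeff_def using gbinomial_sum_lower_neg[of "1/2::real" N] by simp
  also have "\<dots> = pochhammer (1/2) N / fact N"
    unfolding gbinomial_pochhammer by (simp flip: power_add mult_2)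
  finally show ?thesis by (simp add: pochhammer_nonneg)
qed

lemma sum_abs_sqrt_coeff: "(\<Sum>k\<le>N. \<bar>sqrt_coeff k\<bar>) = 2 - (\<Sum>k\<le>N. sqrt_coeff k)"
proof (induction N)
  case (Suc N)
  then show ?case using sqrt_coeff_Suc_nonpos[of N] by simp
qed simp

lemma summable_abs_sqrt_coeff: "summable (\<lambda>n. \<bar>sqrt_coeff n\<bar>)"
  and suminf_abs_sqrt_coeff_Suc: "(\<Sum>n. \<bar>sqrt_coeff (Suc n)\<bar>) \<le> 1"
proof -
  have bounded: "(\<Sum>k<n. \<bar>sqrt_coeff k\<bar>) \<le> 2" for n
  proof -
    have "(\<Sum>k<n. \<bar>sqrt_coeff k\<bar>) \<le> (\<Sum>k\<le>n. \<bar>sqrt_coeff k\<bar>)" by (intro sum_mono2) auto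
    then show ?thesis using sum_abs_sqrt_coeff[of n] sum_sqrt_coeff_nonneg[of n] by linarith
  qed
  show s: "summable (\<lambda>n. \<bar>sqrt_coeff n\<bar>)" by (rule summableI_nonneg_bounded[OF _ bounded]) simp
  have "(\<Sum>n. \<bar>sqrt_coeff (Suc n)\<bar>) = (\<Sum>n. \<bar>sqrt_coeff n\<bar>) - 1"
    using suminf_split_head[OF s] by simp
  then show "(\<Sum>n. \<bar>sqrt_coeff (Suc n)\<bar>) \<le> 1"
    using suminf_le_const[OF s bounded] by simp
qed

lemma sqrt_coeff_convolution:
  "(\<Sum>i\<le>k. sqrt_coeff i * sqrt_coeff (k - i)) = (if k = 0 then 1 else if k = 1 then -1 else 0)"
proof -
  have "(\<Sum>i\<le>k. sqrt_coeff i * sqrt_coeff (k - i))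
      = (-1) ^ k * (\<Sum>i=0..k. ((1/2::real) gchoose i) * ((1/2) gchoose (k - i)))"
    unfolding sqrt_coeff_def sum_distrib_left atLeast0AtMost
    by (intro sum.cong refl) (simp add: mult_ac flip: power_add)
  also have "\<dots> = (-1) ^ k * (of_nat (1 choose k))"
    by (simp only: gbinomial_Vandermonde binomial_gbinomial) simp
  finally show ?thesis by (cases "k \<le> 1") (auto simp: le_Suc_eq)
qed

definition sqrt_series :: "'a::cstar_algebra \<Rightarrow> 'a" where
  "sqrt_series u = (\<Sum>n. scaleR (sqrt_coeff n) (u ^ n))"

lemma norm_sqrt_series_term:
  fixes u :: "'a::cstar_algebra"
  assumes "norm u \<le> 1"
  shows "norm (scaleR (sqrt_coeff n) (u ^ n)) \<le> \<bar>sqrt_coeff n\<bar>"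
  using norm_power_ineq[of u n] power_le_one[OF _ assms, of n] by (simp add: mult_left_le)

lemma summable_sqrt_series:
  fixes u :: "'a::cstar_algebra"
  assumes "norm u \<le> 1"
  shows "summable (\<lambda>n. norm (scaleR (sqrt_coeff n) (u ^ n)))"
  by (rule summable_comparison_test[OF _ summable_abs_sqrt_coeff])
     (use norm_sqrt_series_term[OF assms] in auto)

lemma sqrt_series_square:
  fixes u :: "'a::cstar_algebra"
  assumes u: "norm u \<le> 1"
  shows "sqrt_series u * sqrt_series u = 1 - u"
proof -
  have "sqrt_series u * sqrt_series u
      = (\<Sum>k. \<Sum>i\<le>k. scaleR (sqrt_coeff i) (u ^ i) * scaleR (sqrt_coeff (k - i)) (u ^ (k - i)))"
    unfolding sqrt_series_def by (rule Cauchy_product[OF summable_sqrt_series[OF u] summable_sqrt_series[OF u]])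
  also have "\<dots> = (\<Sum>k. scaleR (\<Sum>i\<le>k. sqrt_coeff i * sqrt_coeff (k - i)) (u ^ k))"
    by (simp add: scaleR_sum_left ac_simps flip: power_add)
  also have "\<dots> = (\<Sum>k\<in>{0, 1}. scaleR (\<Sum>i\<le>k. sqrt_coeff i * sqrt_coeff (k - i)) (u ^ k))"
    by (rule suminf_finite) (simp_all add: sqrt_coeff_convolution)
  also have "\<dots> = 1 - u" by (simp add: sqrt_coeff_convolution)
  finally show ?thesis .
qed

lemma norm_one_minus_sqrt_series:
  fixes u :: "'a::cstar_algebra"
  assumes u: "norm u \<le> 1"
  shows "norm (1 - sqrt_series u) \<le> 1"
proof -
  let ?f = "\<lambda>n. scaleR (sqrt_coeff n) (u ^ n)"
  have s: "summable (\<lambda>n. norm (?f (Suc n)))"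
    using summable_sqrt_series[OF u] by (rule summable_Suc_iff[THEN iffD2])
  have "sqrt_series u - 1 = (\<Sum>n. ?f (Suc n))"
    unfolding sqrt_series_def
    using suminf_split_head[OF summable_norm_cancel[OF summable_sqrt_series[OF u]]] by simp
  then have "norm (1 - sqrt_series u) = norm (\<Sum>n. ?f (Suc n))" by (metis norm_minus_commute)
  also have "\<dots> \<le> (\<Sum>n. norm (?f (Suc n)))" by (rule summable_norm[OF s])
  also have "\<dots> \<le> (\<Sum>n. \<bar>sqrt_coeff (Suc n)\<bar>)"
  proof (rule suminf_le[OF _ s])
    show "norm (?f (Suc n)) \<le> \<bar>sqrt_coeff (Suc n)\<bar>" for n by (rule norm_sqrt_series_term[OF u])
    show "summable (\<lambda>n. \<bar>sqrt_coeff (Suc n)\<bar>)"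
      using summable_abs_sqrt_coeff by (rule summable_Suc_iff[THEN iffD2])
  qed
  also have "\<dots> \<le> 1" by (rule suminf_abs_sqrt_coeff_Suc)
  finally show ?thesis .
qed

lemma adj_sqrt_series:
  fixes u :: "'a::cstar_algebra"
  assumes "norm u \<le> 1" "adj u = u"
  shows "adj (sqrt_series u) = sqrt_series u"
  unfolding sqrt_series_def
  using bounded_linear.suminf[OF bounded_linear_adj summable_norm_cancel[OF summable_sqrt_series[OF assms(1)]]]
    assms(2) by simp

lemma sqrt_series_commute:
  fixes u :: "'a::cstar_algebra"
  assumes "norm u \<le> 1" "y * u = u * y"
  shows "y * sqrt_series u = sqrt_series u * y"
proof -
  have s: "summable (\<lambda>n. scaleR (sqrt_coeff n) (u ^ n))"
    using summable_norm_cancel[OF summable_sqrt_series[OF assms(1)]] .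
  have "y * (u ^ n) = u ^ n * y" for n using power_commuting_commutes[OF assms(2)[symmetric]] by simp
  then have "(\<Sum>n. y * scaleR (sqrt_coeff n) (u ^ n)) = (\<Sum>n. scaleR (sqrt_coeff n) (u ^ n) * y)" by simp
  then show ?thesis unfolding sqrt_series_def suminf_mult[OF s] suminf_mult2[OF s] .
qed

lemma spectrally_positive_sqrt:
  fixes a :: "'a::cstar_algebra"
  assumes a: "spectrally_positive a"
  obtains r where "spectrally_positive r" "r * r = a" "\<And>y. y * a = a * y \<Longrightarrow> y * r = r * y"
proof
  define t where "t = norm a + 1"
  have t: "t > 0" unfolding t_def by (simp add: add_nonneg_pos)
  define u where "u = scaleR (1/t) (of_real t - a)"
  have "norm (of_real t - a) \<le> t" using spectrally_positive_norm_le[OF a, of t] by (simp add: t_def)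
  then have u: "norm u \<le> 1" unfolding u_def using t by simp
  define r where "r = scaleR (sqrt t) (sqrt_series u)"
  have "r * r = scaleR t (1 - u)"
    unfolding r_def using sqrt_series_square[OF u] t by simp
  also have "\<dots> = a" unfolding u_def using t by (simp add: scaleR_diff_right of_real_def)
  finally show "r * r = a" .
  have "norm (of_real (sqrt t) - r) = sqrt t * norm (1 - sqrt_series u)"
    unfolding r_def using t by (simp flip: scaleR_diff_right add: of_real_def)
  also have "\<dots> \<le> sqrt t" using norm_one_minus_sqrt_series[OF u] t by (simp add: mult_left_le)
  finally show "spectrally_positive r"
    using spectrally_positive_adj[OF a] u
    by (intro spectrally_positiveI_norm) (simp_all add: r_def u_def adj_sqrt_series)
  fix y assume "y * a = a * y"
  then have "y * u = u * y" unfolding u_def by (simp add: algebra_simps of_real_def)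
  then show "y * r = r * y" unfolding r_def using sqrt_series_commute[OF u] by simp
qed

lemma self_adjoint_eq_0_if_spectrum_zero:
  fixes p :: "'a::cstar_algebra"
  assumes p: "adj p = p" and inv: "\<And>t. t \<noteq> 0 \<Longrightarrow> invertible_el (of_real t - p)"
  shows "p = 0"
proof (rule ccontr)
  assume "p \<noteq> 0"
  then have "norm p \<le> norm p / 2"
    by (intro self_adjoint_norm_le_spectral_bound[OF p] inv) auto
  then show False using \<open>p \<noteq> 0\<close> by simp
qed

lemma spectrally_positive_antisym:
  assumes p: "spectrally_positive p" and "spectrally_positive (- p)"
  shows "p = 0"
proof (rule self_adjoint_eq_0_if_spectrum_zero)
  show "adj p = p" using spectrally_positive_adj[OF p] .
  fix t :: real assume "t \<noteq> 0"
  then consider "t < 0" | "t > 0" by linarith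
  then show "invertible_el (of_real t - p)"
    using spectrally_positive_invertible[OF p] spectrally_positive_invertible_neg[OF assms(2)] by cases
qed

lemma self_adjoint_cube_eq_0:
  fixes w :: "'a::cstar_algebra"
  assumes w: "adj w = w" and "w * w * w = 0"
  shows "w = 0"
proof -
  have "w ^ 2 ^ 2 = w * (w * w * w)" by (simp add: numeral_eq_Suc mult.assoc)
  then have "norm w ^ 2 ^ 2 = 0" using norm_power2_self_adjoint[OF w, of 2] assms(2) by simp
  then show ?thesis by simp
qed

lemma invertible_el_one_minus_mult_commute:
  fixes a b :: "'a::cstar_algebra"
  assumes "invertible_el (1 - a * b)"
  shows "invertible_el (1 - b * a)"
proof -
  define w where "w = inv_el (1 - a * b)"
  have e: "w - a * b * w = 1" "w - w * a * b = 1"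
    using inv_el_right[OF assms] inv_el_left[OF assms] unfolding w_def by (simp_all add: algebra_simps)
  have "(1 - b * a) * (1 + b * w * a) = 1 - b * a + b * (w - a * b * w) * a"
    "(1 + b * w * a) * (1 - b * a) = 1 - b * a + b * (w - w * a * b) * a"
    by (simp_all add: algebra_simps mult.assoc)
  then have "(1 - b * a) * (1 + b * w * a) = 1" "(1 + b * w * a) * (1 - b * a) = 1"
    unfolding e by simp_all
  then show ?thesis by (rule invertible_elI)
qed

lemma invertible_el_of_real_minus_mult_commute:
  fixes a b :: "'a::cstar_algebra"
  assumes t: "t \<noteq> 0" and "invertible_el (of_real t - a * b)"
  shows "invertible_el (of_real t - b * a)"
proof -
  have e: "of_real t - x * y = scaleR t (1 - scaleR (1/t) x * y)" for x y :: 'a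
    using t by (simp add: scaleR_diff_right of_real_def)
  show ?thesis
    using assms invertible_el_one_minus_mult_commute[of "scaleR (1/t) a" b]
    unfolding e invertible_el_scaleR_iff[OF t] by simp
qed

lemma spectrally_positive_adj_mult_add_mult_adj:
  fixes x :: "'a::cstar_algebra"
  shows "spectrally_positive (adj x * x + x * adj x)"
proof -
  define h where "h = x + adj x"
  define k where "k = scaleC (- \<i>) (x - adj x)"
  have "adj h = h" unfolding h_def by (simp add: add.commute)
  have "adj k = k" unfolding k_def
    by (simp add: adj_scaleC) (metis minus_diff_eq scaleC_minus_left scaleC_minus_right)
  have "k * k = scaleC ((- \<i>) * (- \<i>)) ((x - adj x) * (x - adj x))"
    unfolding k_def by (simp only: scaleC_mult_left scaleC_mult_right scaleC_scaleC)
  then have "k * k = - ((x - adj x) * (x - adj x))" by (simp add: scaleC_minus_left)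
  then have "h * h + k * k = scaleR 2 (adj x * x + x * adj x)"
    unfolding h_def by (simp add: algebra_simps scaleR_2)
  then have "adj x * x + x * adj x = scaleR (1/2) (h * h + k * k)" by simp
  then show ?thesis
    using \<open>adj h = h\<close> \<open>adj k = k\<close>
    by (simp add: spectrally_positive_scaleR spectrally_positive_add spectrally_positive_square)
qed

lemma adj_mult_self_eq_0_if_negative:
  fixes x :: "'a::cstar_algebra"
  assumes neg: "spectrally_positive (- (adj x * x))"
  shows "x = 0"
proof -
  have "spectrally_positive (x * adj x)"
    using spectrally_positive_add[OF spectrally_positive_adj_mult_add_mult_adj[of x] neg] by simp
  have "adj x * x = 0"
  proof (rule self_adjoint_eq_0_if_spectrum_zero)
    fix t :: real assume "t \<noteq> 0"
    then consider "t < 0" | "t > 0" by linarith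
    then show "invertible_el (of_real t - adj x * x)"
    proof cases
      case 1
      then show ?thesis
        using spectrally_positive_invertible[OF \<open>spectrally_positive (x * adj x)\<close>]
          invertible_el_of_real_minus_mult_commute[OF \<open>t \<noteq> 0\<close>] by blast
    qed (rule spectrally_positive_invertible_neg[OF neg])
  qed simp
  then show ?thesis using cstar_identity[of x] by simp
qed

text \<open>If u v = v u = 0 then (t - u) (t - v) = t (t - (u + v)) is a product of commuting factors.\<close>

lemma spectrally_positive_orthogonal_summand:
  fixes u v :: "'a::cstar_algebra"
  assumes uv: "u * v = 0" "v * u = 0" and v: "adj v = v" and sum: "spectrally_positive (u + v)"
  shows "spectrally_positive v"
  unfolding spectrally_positive_def
proof (intro conjI allI impI v)
  fix t :: real assume t: "t < 0"
  have "invertible_el (of_real t :: 'a)"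
    using invertible_el_of_real_minus[of "0::'a" t] t by simp
  then have "invertible_el (of_real t * (of_real t - (u + v)))"
    using spectrally_positive_invertible[OF sum t] by (rule invertible_el_mult)
  moreover have "of_real t * (of_real t - (u + v)) = (of_real t - u) * (of_real t - v)"
    "(of_real t - u) * (of_real t - v) = (of_real t - v) * (of_real t - u)"
    using uv by (simp_all add: algebra_simps of_real_def)
  ultimately show "invertible_el (of_real t - v)"
    using invertible_el_commuting_factors(2) by metis
qed

lemma self_adjoint_negative_part:
  fixes a :: "'a::cstar_algebra"
  assumes a: "adj a = a"
  obtains w where "spectrally_positive w" "a * w = - (w * w)" "w = 0 \<Longrightarrow> spectrally_positive a"
proof -
  obtain r where r: "spectrally_positive r" "r * r = a * a"
    and commute: "\<And>y. y * (a * a) = (a * a) * y \<Longrightarrow> y * r = r * y"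
    using spectrally_positive_sqrt[OF spectrally_positive_square[OF a]] by blast
  have ar: "a * r = r * a" by (rule commute) (simp add: mult.assoc)
  define v where "v = r - a"
  have "spectrally_positive v"
  proof (rule spectrally_positive_orthogonal_summand)
    show "(r + a) * v = 0" "v * (r + a) = 0" using r ar by (simp_all add: v_def algebra_simps)
    show "adj v = v" using a spectrally_positive_adj[OF r(1)] by (simp add: v_def)
    show "spectrally_positive (r + a + v)"
      using spectrally_positive_scaleR[OF r(1), of 2] by (simp add: v_def scaleR_2)
  qed
  show thesis
  proof
    show "spectrally_positive (scaleR (1/2) v)"
      using spectrally_positive_scaleR[OF \<open>spectrally_positive v\<close>] by simp
    have "scaleR 2 (a * v) = - (v * v)" using r ar by (simp add: v_def algebra_simps scaleR_2)
    from arg_cong[OF this, of "scaleR (1/2)"]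
    show "a * scaleR (1/2) v = - (scaleR (1/2) v * scaleR (1/2) v)" by simp
    show "scaleR (1/2) v = 0 \<Longrightarrow> spectrally_positive a" using r(1) by (simp add: v_def)
  qed
qed

text \<open>If w is the negative part of a = x* x, then (x w)* (x w) = w a w = - w^3 while w^3 is
  positive; hence x w = 0, so w^3 = 0 and w = 0.\<close>

theorem spectrally_positive_adj_mult_self: "spectrally_positive (adj x * x)"
proof -
  define a where "a = adj x * x"
  obtain w where w: "spectrally_positive w" "a * w = - (w * w)" "w = 0 \<Longrightarrow> spectrally_positive a"
    using self_adjoint_negative_part[of a] unfolding a_def by auto
  obtain q where q: "spectrally_positive q" "q * q = w" and "\<And>y. y * w = w * y \<Longrightarrow> y * q = q * y"
    using spectrally_positive_sqrt[OF w(1)] by blast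
  then have qw: "w * q = q * w" by blast
  have aw: "adj w = w" "adj q = q" using w(1) q(1) by (simp_all add: spectrally_positive_adj)
  have "(q * w) * (q * w) = w * w * w" using q(2) qw by (metis mult.assoc)
  then have "spectrally_positive (w * w * w)"
    using spectrally_positive_square[of "q * w"] aw qw by simp
  moreover have cube: "w * w * w = - (adj (x * w) * (x * w))"
    using w(2) aw unfolding a_def by (simp add: mult.assoc)
  ultimately have "x * w = 0" using adj_mult_self_eq_0_if_negative by metis
  then have "w * w * w = 0" using cube by simp
  then have "w = 0" by (rule self_adjoint_cube_eq_0[OF aw(1)])
  then show ?thesis using w(3) unfolding a_def by blast
qed

lemma positive_iff_spectrally_positive: "positive a \<longleftrightarrow> spectrally_positive (a::'a::cstar_algebra)"
proof
  assume "positive a"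
  then show "spectrally_positive a"
    unfolding positive_def using spectrally_positive_adj_mult_self by blast
next
  assume a: "spectrally_positive a"
  obtain r where "spectrally_positive r" "r * r = a" using spectrally_positive_sqrt[OF a] by blast
  then have "a = adj r * r" by (simp add: spectrally_positive_adj)
  then show "positive a" unfolding positive_def by blast
qed

lemma spectrally_positive_conj:
  assumes r: "spectrally_positive r" and d: "adj d = d"
  shows "spectrally_positive (d * r * d)"
proof -
  obtain q where q: "spectrally_positive q" "q * q = r" using spectrally_positive_sqrt[OF r] by blast
  have "d * r * d = adj (q * d) * (q * d)"
    using d q(1) by (simp add: spectrally_positive_adj mult.assoc flip: q(2))
  then show ?thesis by (simp only: spectrally_positive_adj_mult_self)
qed

lemma spectrally_positive_sqrt_unique_commuting:
  assumes r: "spectrally_positive r" and r': "spectrally_positive r'"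
    and sq: "r * r = r' * r'" and commute: "r * r' = r' * r"
  shows "r = r'"
proof -
  define d where "d = r - r'"
  have d: "adj d = d" unfolding d_def using r r' by (simp add: spectrally_positive_adj)
  have "d * (r + r') = 0" unfolding d_def using sq commute by (simp add: algebra_simps)
  then have "d * (r + r') * d = 0" by simp
  then have neg: "d * r * d = - (d * r' * d)" by (simp add: algebra_simps eq_neg_iff_add_eq_0)
  then have "spectrally_positive (- (d * r' * d))" using spectrally_positive_conj[OF r d] by simp
  then have zero': "d * r' * d = 0" by (rule spectrally_positive_antisym[OF spectrally_positive_conj[OF r' d]])
  then have zero: "d * r * d = 0" using neg by simp
  have "d * d * d = d * (r - r') * d" by (simp only: d_def[symmetric])
  also have "\<dots> = 0" using zero zero' by (simp add: left_diff_distrib right_diff_distrib)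
  finally have "d * d * d = 0" .
  then have "d = 0" by (rule self_adjoint_cube_eq_0[OF d])
  then show ?thesis by (simp add: d_def)
qed

lemma spectrally_positive_sqrt_unique:
  assumes r: "spectrally_positive r" and r': "spectrally_positive r'" and sq: "r * r = r' * r'"
  shows "r = r'"
proof -
  obtain r0 where r0: "spectrally_positive r0" "r0 * r0 = r * r"
    and commute: "\<And>y. y * (r * r) = (r * r) * y \<Longrightarrow> y * r0 = r0 * y"
    using spectrally_positive_sqrt[OF spectrally_positive_square[OF spectrally_positive_adj[OF r]]] by blast
  have "r = r0"
    by (rule spectrally_positive_sqrt_unique_commuting[OF r r0(1)])
       (use r0 commute[of r] in \<open>simp_all add: mult.assoc\<close>)
  moreover have "r' = r0"
    by (rule spectrally_positive_sqrt_unique_commuting[OF r' r0(1)])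
       (use r0 commute[of r'] sq in \<open>simp_all add: mult.assoc\<close>)
  ultimately show ?thesis by simp
qed

lemma psqrt_eq:
  assumes "spectrally_positive r" "r * r = a"
  shows "psqrt a = r"
  unfolding psqrt_def positive_iff_spectrally_positive
proof (rule the_equality)
  fix r' assume r': "spectrally_positive r' \<and> r' * r' = a"
  show "r' = r" by (rule spectrally_positive_sqrt_unique) (use r' assms in auto)
qed (use assms in blast)

lemma psqrt:
  assumes "spectrally_positive a"
  shows "spectrally_positive (psqrt a)" "psqrt a * psqrt a = a"
    "\<And>y. y * a = a * y \<Longrightarrow> y * psqrt a = psqrt a * y"
proof -
  obtain r where r: "spectrally_positive r" "r * r = a" "\<And>y. y * a = a * y \<Longrightarrow> y * r = r * y"
    using spectrally_positive_sqrt[OF assms] by blast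
  have eq: "psqrt a = r" by (rule psqrt_eq[OF r(1,2)])
  show "spectrally_positive (psqrt a)" "psqrt a * psqrt a = a" unfolding eq by (fact r(1), fact r(2))
  show "y * psqrt a = psqrt a * y" if "y * a = a * y" for y unfolding eq by (rule r(3)[OF that])
qed

section \<open>Moore--Penrose inverse and range projection\<close>

lemma mp_inv_eq:
  fixes T X :: "'a::cstar_algebra"
  assumes 1: "T * X * T = T" and 2: "X * T * X = X"
    and 3: "adj (T * X) = T * X" and 4: "adj (X * T) = X * T"
  shows "mp_inv T = X"
  unfolding mp_inv_def
proof (rule the_equality)
  show "T * X * T = T \<and> X * T * X = X \<and> adj (T * X) = T * X \<and> adj (X * T) = X * T"
    using assms by blast
  fix Y assume "T * Y * T = T \<and> Y * T * Y = Y \<and> adj (T * Y) = T * Y \<and> adj (Y * T) = Y * T"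
  then have y1: "T * Y * T = T" and y2: "Y * T * Y = Y"
    and y3: "adj (T * Y) = T * Y" and y4: "adj (Y * T) = Y * T" by auto
  have "X * T = adj (T * Y * T) * adj X" using 4 y1 by simp
  also have "\<dots> = adj (Y * T) * adj (X * T)" by (simp add: mult.assoc)
  also have "\<dots> = Y * T" using y4 4 1 by (simp add: mult.assoc)
  finally have XT: "X * T = Y * T" .
  have "T * X = adj X * adj (T * Y * T)" using 3 y1 by simp
  also have "\<dots> = adj (T * X) * adj (T * Y)" by (simp add: mult.assoc)
  also have "\<dots> = T * Y" using y3 3 1 by (simp flip: mult.assoc)
  finally have TX: "T * X = T * Y" .
  have "Y = X * T * Y" using y2 XT by simp
  also have "\<dots> = X" using 2 TX by (simp add: mult.assoc)
  finally show "Y = X" .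
qed

lemma range_proj_eq:
  fixes Q P :: "'a::cstar_algebra"
  assumes P: "adj P = P" "P * P = P" "P * Q = Q" "Q * P = P"
  shows "range_proj Q = P"
  unfolding range_proj_def
proof (rule the_equality)
  show "adj P = P \<and> P * P = P \<and> P * Q = Q \<and> Q * P = P" using P by blast
  fix P' assume "adj P' = P' \<and> P' * P' = P' \<and> P' * Q = Q \<and> Q * P' = P'"
  then have P': "adj P' = P'" "P' * Q = Q" "Q * P' = P'" by auto
  have "P * P' = P'" using P(3) P'(3) by (metis mult.assoc)
  moreover have "P' * P = P" using P(4) P'(2) by (metis mult.assoc)
  ultimately show "P' = P" using P(1) P'(1) by (metis adj_mult)
qed

text \<open>For an idempotent Q, the self-adjoint element h = Q + Q* - 1 satisfies
  h h = 1 + (Q - Q*)* (Q - Q*) and intertwines Q with Q*; then Q h^-1 is the range projection.\<close>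

lemma invertible_el_idempotent_add_adj:
  fixes Q :: "'a::cstar_algebra"
  assumes Q: "Q * Q = Q"
  shows "invertible_el (Q + adj Q - 1)"
proof -
  have "adj Q * adj Q = adj Q" using Q by (metis adj_mult)
  then have "(Q + adj Q - 1) * (Q + adj Q - 1) = 1 + adj (Q - adj Q) * (Q - adj Q)"
    using Q by (simp add: algebra_simps)
  then have "invertible_el ((Q + adj Q - 1) * (Q + adj Q - 1))"
    using spectrally_positive_invertible_one_plus[OF spectrally_positive_adj_mult_self[of "Q - adj Q"]]
    by simp
  then show ?thesis using invertible_el_commuting_factors(1) by blast
qed

lemma inv_el_intertwine:
  fixes h a b :: "'a::cstar_algebra"
  assumes "invertible_el h" "h * a = b * h"
  shows "inv_el h * b = a * inv_el h"
proof -
  have "inv_el h * b = inv_el h * (b * h) * inv_el h" by (simp add: mult.assoc inv_el_right[OF assms(1)])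
  also have "\<dots> = a * inv_el h" by (simp flip: assms(2) mult.assoc add: inv_el_left[OF assms(1)])
  finally show ?thesis .
qed

lemma range_proj_idempotent:
  fixes Q :: "'a::cstar_algebra"
  assumes Q: "Q * Q = Q"
  defines "P \<equiv> range_proj Q"
  shows "adj P = P" "P * P = P" "P * Q = Q" "Q * P = P"
proof -
  define h where "h = Q + adj Q - 1"
  have ih: "invertible_el h" unfolding h_def using invertible_el_idempotent_add_adj[OF Q] .
  define g where "g = inv_el h"
  have Qa: "adj Q * adj Q = adj Q" using Q by (metis adj_mult)
  have "adj h = h" unfolding h_def by (simp add: add.commute)
  then have "adj g = g" unfolding g_def by (rule adj_inv_el[OF ih])
  have "h * Q = adj Q * h" "h * adj Q = Q * h" "Q * adj Q = Q * h"
    unfolding h_def using Q Qa by (simp_all add: algebra_simps)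
  then have gQ: "g * adj Q = Q * g" "g * Q = adj Q * g"
    unfolding g_def using inv_el_intertwine[OF ih] by simp_all
  define P0 where "P0 = Q * g"
  have "adj P0 = P0" unfolding P0_def using \<open>adj g = g\<close> gQ by simp
  moreover have "P0 * Q = Q"
  proof -
    have "P0 * Q = Q * adj Q * g" unfolding P0_def using gQ(2) by (simp add: mult.assoc)
    also have "\<dots> = Q * (h * g)" using \<open>Q * adj Q = Q * h\<close> by (simp add: mult.assoc)
    also have "\<dots> = Q" using inv_el_right[OF ih] by (simp add: g_def)
    finally show ?thesis .
  qed
  moreover have "Q * P0 = P0" unfolding P0_def using Q by (simp flip: mult.assoc)
  moreover have "P0 * P0 = P0" using \<open>P0 * Q = Q\<close> unfolding P0_def by (metis mult.assoc)
  ultimately show "adj P = P" "P * P = P" "P * Q = Q" "Q * P = P"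
    using range_proj_eq[of P0 Q] unfolding P_def by simp_all
qed

section \<open>Matched and supplementary projections\<close>

lemma commute_mult:
  fixes a x y :: "'a::semigroup_mult"
  assumes "a * x = x * a" "a * y = y * a"
  shows "a * (x * y) = x * y * a"
proof -
  have "a * (x * y) = x * (a * y)" by (simp only: assms(1) mult.assoc[symmetric])
  also have "\<dots> = x * y * a" by (simp only: assms(2) mult.assoc)
  finally show ?thesis .
qed

lemma mult_assoc_lift: "a * b = c \<Longrightarrow> a * (b * z) = c * (z::'a::semigroup_mult)"
  by (simp flip: mult.assoc)

lemma double_cancel: "x + x = y + y \<Longrightarrow> x = (y::'a::real_vector)"
  by (metis scaleR_2 scaleR_cancel_left zero_neq_numeral)

lemma half_plus_half: "scaleR (1/2) x + scaleR (1/2) x = (x::'a::real_vector)"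
  by (simp flip: scaleR_add_right)

locale idempotent_el =
  fixes Q :: "'a::cstar_algebra"
  assumes idempotent: "Q * Q = Q"
begin

definition P where "P = range_proj Q"
definition T where "T = Q - P"
definition S where "S = T + adj T"
definition F where "F = psqrt (1 + S * S)"
definition G where "G = inv_el F"

lemma P: "adj P = P" "P * P = P" "P * Q = Q" "Q * P = P"
  unfolding P_def using range_proj_idempotent[OF idempotent] by simp_all

lemma Q_eq: "Q = P + T"
  by (simp add: T_def)

lemma T: "P * T = T" "T * P = 0" "T * T = 0" "P * adj T = 0" "adj T * P = adj T" "adj T * adj T = 0"
proof -
  show PT: "P * T = T" and TP: "T * P = 0" and TT: "T * T = 0"
    unfolding T_def using P idempotent by (simp_all add: algebra_simps)
  show "P * adj T = 0" "adj T * P = adj T" "adj T * adj T = 0"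
    using arg_cong[OF TP, of adj] arg_cong[OF PT, of adj] arg_cong[OF TT, of adj] P(1) by simp_all
qed

lemma S: "adj S = S" "P * S = T" "S * P = adj T" "S * S = T * adj T + adj T * T"
  unfolding S_def using T by (simp_all add: algebra_simps add.commute)

lemma commute_P_S_imp_commute_T:
  assumes "y * P = P * y" "y * S = S * y"
  shows "y * T = T * y" "y * adj T = adj T * y"
  using commute_mult[OF assms] commute_mult[OF assms(2,1)] unfolding S(2,3) by simp_all

lemma F: "spectrally_positive F" "F * F = 1 + S * S" "F * P = P * F" "F * S = S * F"
proof -
  have pos: "spectrally_positive (1 + S * S)"
    by (intro spectrally_positive_add spectrally_positive_one spectrally_positive_square S(1))
  show "spectrally_positive F" "F * F = 1 + S * S" unfolding F_def by (fact psqrt(1,2)[OF pos])+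
  have PSS: "P * (S * S) = (S * S) * P"
    unfolding S(4) using T T[THEN mult_assoc_lift] by (simp add: algebra_simps)
  show "F * P = P * F"
    unfolding F_def by (rule sym, rule psqrt(3)[OF pos]) (use PSS in \<open>simp add: algebra_simps\<close>)
  show "F * S = S * F"
    unfolding F_def by (rule sym, rule psqrt(3)[OF pos]) (simp add: algebra_simps mult.assoc)
qed

lemma invertible_F: "invertible_el F"
proof -
  have "invertible_el (F * F)"
    unfolding F(2) by (rule spectrally_positive_invertible_one_plus[OF spectrally_positive_square[OF S(1)]])
  then show ?thesis by (rule invertible_el_commuting_factors(1)[OF _ refl])
qed

lemma G: "F * G = 1" "G * F = 1" "G * P = P * G" "G * S = S * G"
  unfolding G_def using inv_el_right[OF invertible_F] inv_el_left[OF invertible_F]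
    inv_el_commute[OF invertible_F F(3)[symmetric]] inv_el_commute[OF invertible_F F(4)[symmetric]]
  by simp_all

lemma spectrally_positive_G: "spectrally_positive G"
proof -
  have "adj G = G" unfolding G_def by (rule adj_inv_el[OF invertible_F spectrally_positive_adj[OF F(1)]])
  then have "spectrally_positive (G * F * G)" by (rule spectrally_positive_conj[OF F(1)])
  then show ?thesis using G(2) by simp
qed

definition K where "K = inv_el (1 + F)"

lemma K: "(1 + F) * K = 1" "K * (1 + F) = 1" "K * P = P * K" "K * S = S * K"
proof -
  have inv: "invertible_el (1 + F)" by (rule spectrally_positive_invertible_one_plus[OF F(1)])
  show "(1 + F) * K = 1" "K * (1 + F) = 1"
    unfolding K_def using inv_el_right[OF inv] inv_el_left[OF inv] by simp_all
  have "P * (1 + F) = (1 + F) * P" "S * (1 + F) = (1 + F) * S"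
    using F(3,4) by (simp_all add: algebra_simps)
  then have "P * K = K * P" "S * K = K * S" unfolding K_def by (simp_all add: inv_el_commute[OF inv])
  then show "K * P = P * K" "K * S = S * K" by simp_all
qed

lemmas central_T =
  commute_P_S_imp_commute_T[OF F(3,4)] commute_P_S_imp_commute_T[OF G(3,4)]
  commute_P_S_imp_commute_T[OF K(3,4)]

lemma central_products: "F * K = 1 - K" "K * F = 1 - K" "G * K = G - K" "K * G = G - K"
proof -
  show "F * K = 1 - K" "K * F = 1 - K" using K(1,2) by (simp_all add: algebra_simps)
  have "G = G * ((1 + F) * K)" using K(1) by simp
  also have "\<dots> = G * K + K" using G(2) G(2)[THEN mult_assoc_lift] by (simp add: algebra_simps)
  finally show GK: "G * K = G - K" by (simp add: algebra_simps)
  have "G * (1 + F) = (1 + F) * G" using G(1,2) by (simp add: algebra_simps)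
  then have "G * K = K * G"
    unfolding K_def using inv_el_commute[OF spectrally_positive_invertible_one_plus[OF F(1)]] by blast
  then show "K * G = G - K" using GK by simp
qed

text \<open>Rewrite rules for products: F, G and K commute with P, T and adj T and are moved to the
  right, where their products cancel; the lifted copies act inside right-nested products.\<close>

lemmas decomposition_rules =
  P(2) T F(3) G(1-3) K(3) central_T central_products
  P(2)[THEN mult_assoc_lift] T[THEN mult_assoc_lift] F(3)[THEN mult_assoc_lift]
  G(1-3)[THEN mult_assoc_lift] K(3)[THEN mult_assoc_lift] central_T[THEN mult_assoc_lift]
  central_products[THEN mult_assoc_lift]

lemma adj_T_T: "adj T * T = (1 - P) * (F * F - 1)"
  using F(2) S(4) T T[THEN mult_assoc_lift] by (simp add: algebra_simps)

lemma adj_Q: "adj Q = P + adj T"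
proof -
  have "adj (P + T) = P + adj T" using P(1) by simp
  then show ?thesis by (simp only: Q_eq[symmetric])
qed

lemma absv_adj_Q: "absv (adj Q) = P * F"
proof -
  have "(P + T) * (P + adj T) = (P * F) * (P * F)"
    using F(2) S(4) by (simp add: algebra_simps decomposition_rules)
  then have "Q * adj Q = (P * F) * (P * F)" by (simp only: adj_Q Q_eq[symmetric])
  moreover have "spectrally_positive (P * F)"
    using spectrally_positive_conj[OF F(1) P(1)] by (simp add: decomposition_rules mult.assoc)
  ultimately show ?thesis unfolding absv_def by (simp add: psqrt_eq)
qed

lemma mp_inv_PF: "mp_inv (P * F) = P * G"
proof (rule mp_inv_eq)
  have PF_PG: "P * F * (P * G) = P" and PG_PF: "P * G * (P * F) = P"
    by (simp_all add: mult.assoc decomposition_rules)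
  show "P * F * (P * G) * (P * F) = P * F" "P * G * (P * F) * (P * G) = P * G"
    unfolding PF_PG PG_PF by (simp_all add: mult.assoc decomposition_rules)
  show "adj (P * F * (P * G)) = P * F * (P * G)" "adj (P * G * (P * F)) = P * G * (P * F)"
    unfolding PF_PG PG_PF by (simp_all add: P(1))
qed

lemma inv_PF_plus_one: "inv_el (P * F + 1) = P * K + (1 - P)"
  by (rule inv_el_unique) (simp_all add: algebra_simps decomposition_rules)

lemma adj_T_T_K: "adj T * (T * K) = adj T * (T * G) - 1 + P + G - P * G"
proof -
  have "(F * F - 1) * (G * K) = 1 - G" by (simp add: algebra_simps decomposition_rules)
  then have "adj T * T * (G * K) = (1 - P) * (1 - G)" unfolding adj_T_T by (simp only: mult.assoc)
  then have X: "adj T * T * (G - K) = (1 - P) * (1 - G)" by (simp only: central_products(3))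
  have "adj T * (T * K) = adj T * (T * G) - adj T * T * (G - K)" by (simp add: algebra_simps)
  also have "\<dots> = adj T * (T * G) - 1 + P + G - P * G" unfolding X by (simp add: algebra_simps)
  finally show ?thesis .
qed

lemma matched_proj_eq: "matched_proj Q = scaleR (1/2) (1 + G * (P + P - 1 + S))"
proof -
  have "(P * F + (P + adj T)) * (P * G) * (P * K + (1 - P)) * (P * F + (P + T))
      = 1 + G * (P + P - 1 + S)"
    unfolding S_def by (simp add: algebra_simps decomposition_rules adj_T_T_K)
  then show ?thesis
    unfolding matched_proj_def absv_adj_Q mp_inv_PF inv_PF_plus_one by (simp only: adj_Q Q_eq[symmetric])
qed

lemma reflected_idempotent: "idempotent_el (2 * P - Q)"
  by unfold_locales (use P idempotent in \<open>simp add: algebra_simps mult_2\<close>)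

lemma range_proj_reflected: "range_proj (2 * P - Q) = P"
  by (rule range_proj_eq) (use P in \<open>simp_all add: algebra_simps mult_2\<close>)

lemma supp_proj_eq: "supp_proj Q = scaleR (1/2) (1 + G * (P + P - 1 - S))"
proof -
  interpret reflected: idempotent_el "2 * P - Q" by (rule reflected_idempotent)
  have P': "reflected.P = P" unfolding reflected.P_def by (rule range_proj_reflected)
  then have "reflected.T = - T" unfolding reflected.T_def T_def by (simp add: mult_2)
  then have S': "reflected.S = - S" unfolding reflected.S_def S_def by simp
  then have G': "reflected.G = G" unfolding reflected.G_def G_def reflected.F_def F_def by simp
  show ?thesis
    using reflected.matched_proj_eq unfolding supp_proj_def P_def[symmetric] P' S' G' by simp
qed

lemma matched_proj_double: "matched_proj Q + matched_proj Q = 1 + G * (P + P - 1 + S)"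
  unfolding matched_proj_eq by (rule half_plus_half)

lemma supp_proj_double: "supp_proj Q + supp_proj Q = 1 + G * (P + P - 1 - S)"
  unfolding supp_proj_eq by (rule half_plus_half)

lemma matched_plus_supp: "matched_proj Q + supp_proj Q = 1 + G * (P + P - 1)"
proof (rule double_cancel)
  have "matched_proj Q + supp_proj Q + (matched_proj Q + supp_proj Q)
      = (matched_proj Q + matched_proj Q) + (supp_proj Q + supp_proj Q)" by (simp add: algebra_simps)
  also have "\<dots> = 1 + G * (P + P - 1) + (1 + G * (P + P - 1))"
    unfolding matched_proj_double supp_proj_double by (simp add: algebra_simps)
  finally show "matched_proj Q + supp_proj Q + (matched_proj Q + supp_proj Q)
      = 1 + G * (P + P - 1) + (1 + G * (P + P - 1))" .
qed

lemma square_one_minus_matched_supp: "(1 - matched_proj Q - supp_proj Q) ^ 2 = G * G"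
proof -
  have "1 - matched_proj Q - supp_proj Q = - (G * (P + P - 1))"
    using matched_plus_supp by (simp add: algebra_simps)
  then show ?thesis
    unfolding power2_eq_square by (simp only:) (simp add: algebra_simps decomposition_rules)
qed

lemma reconstruction:
  "F * F * ((G + supp_proj Q) * (2 * matched_proj Q - 1) + 1 - matched_proj Q) = Q + Q"
proof (rule double_cancel)
  define M where "M = G * (P + P - 1 + S)"
  define N where "N = G * (P + P - 1 - S)"
  let ?Z = "(G + supp_proj Q) * (2 * matched_proj Q - 1) + 1 - matched_proj Q"
  have m: "matched_proj Q + matched_proj Q = 1 + M" and s: "supp_proj Q + supp_proj Q = 1 + N"
    unfolding M_def N_def by (fact matched_proj_double, fact supp_proj_double)
  have "2 * matched_proj Q - 1 = M" using m by (simp add: mult_2)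
  then have "?Z + ?Z = G * M + G * M + (supp_proj Q + supp_proj Q) * M + 1 + 1
      - (matched_proj Q + matched_proj Q)"
    by (simp add: algebra_simps)
  also have "\<dots> = G * M + G * M + N * M + 1" unfolding s m by (simp add: algebra_simps)
  finally have double: "?Z + ?Z = G * M + G * M + N * M + 1" .
  have FFGM: "F * F * (G * M + G * M + N * M)
      = (P + P - 1 + S) + (P + P - 1 + S) + (P + P - 1 - S) * (P + P - 1 + S)"
    unfolding M_def N_def S_def by (simp add: algebra_simps decomposition_rules)
  have "F * F * ?Z + F * F * ?Z = F * F * (?Z + ?Z)" by (simp only: distrib_left)
  also have "\<dots> = F * F * (G * M + G * M + N * M + 1)" by (simp only: double)
  also have "\<dots> = F * F * (G * M + G * M + N * M) + F * F" by (simp add: algebra_simps)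
  also have "\<dots> = (P + P - 1 + S) + (P + P - 1 + S) + (P + P - 1 - S) * (P + P - 1 + S) + (1 + S * S)"
    by (subst FFGM) (simp only: F(2))
  also have "\<dots> = (P + T + (P + T)) + (P + T + (P + T))"
    unfolding S_def by (simp add: algebra_simps decomposition_rules)
  also have "\<dots> = Q + Q + (Q + Q)" by (simp only: Q_eq[symmetric])
  finally show "F * F * ?Z + F * F * ?Z = Q + Q + (Q + Q)" .
qed

end

theorem theorem5p8:
  fixes Q :: "'a::cstar_algebra"
  assumes "idempotent Q"
  defines "C \<equiv> (1 - matched_proj Q - supp_proj Q) ^ 2"
  shows "invertible_el C \<and>
    Q = scaleR (1/2) (inv_el C *
          ((psqrt C + supp_proj Q) * (2 * matched_proj Q - 1) + 1 - matched_proj Q))"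
proof -
  interpret idempotent_el Q using assms(1) by unfold_locales (simp add: idempotent_def)
  have C: "C = G * G" unfolding C_def by (rule square_one_minus_matched_supp)
  have "C * (F * F) = 1" "(F * F) * C = 1" unfolding C by (simp_all add: mult.assoc decomposition_rules)
  then have inv: "invertible_el C" "inv_el C = F * F" using invertible_elI inv_el_unique by blast+
  have "psqrt C = G" unfolding C by (rule psqrt_eq[OF spectrally_positive_G refl])
  then have "inv_el C * ((psqrt C + supp_proj Q) * (2 * matched_proj Q - 1) + 1 - matched_proj Q) = Q + Q"
    using inv(2) reconstruction by (simp add: mult.assoc)
  then show ?thesis using inv(1) by simp
qed

end
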